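(* Let $n>0$ be a natural number and let $A=pqs(n,cs',us',ds')$ be an atom (possibly non-ground) such that $cs'$ is a list of length $n$ and every ground instance of $A$ belongs to $S$. Then $cs'$ is a list of distinct members whose members are exactly $1,\dots,n$, and it is a solution of the $n$ queens problem: placing, for each $j\in\{1,\dots,n\}$, the queen of row $j$ in column $k$ where $j$ is the $k$-th member of $cs'$, no two queens share a row, a column, or a diagonal (i.e. for distinct $j,j'$ in columns $k,k'$ one has $k\ne k'$, $k+j\ne k'+j'$ and $k-j\ne k'-j'$). In particular, since NQUEENS is correct w.r.t. $S$, this holds for every answer of NQUEENS that is an instance of a query $pqs(n,q_0,X,Y)$ with $q_0$ a list of $n$ distinct variables.
   Context: Terms are built over a fixed alphabet containing the constant $0$, the unary symbol $s$, the list constant $[\,]$ and the binary list constructor $[\cdot|\cdot]$; $\mathcal{HU}$ is the set of ground terms and $\mathcal{HB}$ the set of ground atoms. A natural number $i$ is identified with the term $s^i(0)$. Prolog list notation is used: $[e_1,\dots,e_n|e]$ stands for $e$ when $n=0$, and a list of length $n$ is a term $[e_1,\dots,e_n]$. A term $e$ is the $k$-th member of a term $t$ ($k\ge 1$) if $t=[e_1,\dots,e_{k-1},e|e']$ for some terms $e_1,\dots,e_{k-1},e'$; $e$ is a member of $t$ if it is its $k$-th member for some $k$. A list of distinct members is a list whose elements are pairwise distinct. The program NQUEENS consists of the definite clauses (capitalized names are variables): (C1) $pqs(0,X_1,X_2,X_3)$. (C2) $pqs(s(I),Cs,Us,[X|Ds]) \gets pqs(I,Cs,[Y|Us],Ds),\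 pq(s(I),Cs,Us,Ds)$. (C3) $pq(I,[I|X_1],[I|X_2],[I|X_3])$. (C4) $pq(I,[X_1|Cs],[X_2|Us],[X_3|Ds]) \gets pq(I,Cs,Us,Ds)$. An answer of a program $P$ is a query $Q$ with $P\models Q$. A program $P$ is correct w.r.t. a set $S\subseteq\mathcal{HB}$ if its least Herbrand model is contained in $S$. If a number $j$ is the $k$-th member of a list $cs$, the up-diagonal number of $j$ w.r.t. $i$ in $cs$ is $k+j-i$ and the down-diagonal number is $k+i-j$. A triple $(cs,us,ds)$ of terms is correct up to $m$ w.r.t. $i$ when $0\le m\le i$ and: $cs$ is a list of distinct members and each $j\in\{1,\dots,m\}$ is a member of $cs$; the up-diagonal numbers of $1,\dots,m$ in $cs$ are pairwise distinct, and likewise the down-diagonal numbers; and for each $j\in\{1,\dots,m\}$, if the up-diagonal (resp. down-diagonal) number of $j$ w.r.t. $i$ in $cs$ is $l>0$, then the $l$-th member of $us$ (resp. $ds$) is $j$. Specifications: $S_{pq}=\{pq(i,[c_1,\dots,c_k,i|c],[u_1,\dots,u_k,i|u],[d_1,\dots,d_k,i|d])\in\mathcal{HB}\mid k\ge0\}$; $S_{pqs}=\{pqs(0,cs,us,ds)\mid cs,us,ds\in\mathcal{HU}\}\cup\{pqs(i,cs,us,[t|ds])\in\mathcal{HB}\mid i>0$, $1,\dots,i$ are members of $cs$, and if $cs$ is a list of distinct members then $(cs,us,ds)$ is correct up to $i$ w.r.t. $i\}$; $S=S_{pq}\cup S_{pqs}$. *)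

theory Defs
  imports Main
begin

datatype trm = V nat | Zr | Sc trm | Nl | Cs trm trm

datatype atom = Pqs trm trm trm trm | Pq trm trm trm trm

fun ground :: "trm \<Rightarrow> bool" where
  "ground (V x) = False"
| "ground Zr = True"
| "ground (Sc t) = ground t"
| "ground Nl = True"
| "ground (Cs a b) = (ground a \<and> ground b)"

fun ground_atom :: "atom \<Rightarrow> bool" where
  "ground_atom (Pqs a b c d) = (ground a \<and> ground b \<and> ground c \<and> ground d)"
| "ground_atom (Pq a b c d) = (ground a \<and> ground b \<and> ground c \<and> ground d)"

fun subst :: "(nat \<Rightarrow> trm) \<Rightarrow> trm \<Rightarrow> trm" where
  "subst \<sigma> (V x) = \<sigma> x"
| "subst \<sigma> Zr = Zr"
| "subst \<sigma> (Sc t) = Sc (subst \<sigma> t)"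
| "subst \<sigma> Nl = Nl"
| "subst \<sigma> (Cs a b) = Cs (subst \<sigma> a) (subst \<sigma> b)"

fun atom_subst :: "(nat \<Rightarrow> trm) \<Rightarrow> atom \<Rightarrow> atom" where
  "atom_subst \<sigma> (Pqs a b c d) = Pqs (subst \<sigma> a) (subst \<sigma> b) (subst \<sigma> c) (subst \<sigma> d)"
| "atom_subst \<sigma> (Pq a b c d) = Pq (subst \<sigma> a) (subst \<sigma> b) (subst \<sigma> c) (subst \<sigma> d)"

definition ground_instances :: "atom \<Rightarrow> atom set" where
  "ground_instances A = {atom_subst \<sigma> A | \<sigma>. ground_atom (atom_subst \<sigma> A)}"

fun num :: "nat \<Rightarrow> trm" where
  "num 0 = Zr"
| "num (Suc n) = Sc (num n)"

text \<open>Prolog list notation [e1,...,en|e] and [e1,...,en].\<close>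
definition lst :: "trm list \<Rightarrow> trm \<Rightarrow> trm" where
  "lst es e = foldr Cs es e"

definition list_term :: "trm list \<Rightarrow> trm" where
  "list_term es = lst es Nl"

definition kth_member :: "trm \<Rightarrow> nat \<Rightarrow> trm \<Rightarrow> bool" where
  "kth_member t k e \<longleftrightarrow> k \<ge> 1 \<and> (\<exists>es e'. length es = k - 1 \<and> t = lst (es @ [e]) e')"

definition member :: "trm \<Rightarrow> trm \<Rightarrow> bool" where
  "member e t \<longleftrightarrow> (\<exists>k. kth_member t k e)"

definition distinct_members_list :: "trm \<Rightarrow> bool" where
  "distinct_members_list t \<longleftrightarrow> (\<exists>es. t = list_term es \<and> distinct es)"

text \<open>(cs,us,ds) correct up to m w.r.t. i. Up-diagonal number of j (k-th member of cs)
  is k+j-i, down-diagonal number is k+i-j (integers).\<close>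
definition correct_upto :: "trm \<Rightarrow> trm \<Rightarrow> trm \<Rightarrow> nat \<Rightarrow> nat \<Rightarrow> bool" where
  "correct_upto cs us ds m i \<longleftrightarrow>
     m \<le> i \<and> distinct_members_list cs \<and> (\<forall>j\<in>{1..m}. member (num j) cs) \<and>
     (\<forall>j\<in>{1..m}. \<forall>j'\<in>{1..m}. \<forall>k k'. j \<noteq> j' \<and> kth_member cs k (num j) \<and> kth_member cs k' (num j')
        \<longrightarrow> int k + int j - int i \<noteq> int k' + int j' - int i
          \<and> int k + int i - int j \<noteq> int k' + int i - int j') \<and>
     (\<forall>j\<in>{1..m}. \<forall>k. kth_member cs k (num j) \<longrightarrow>
        (int k + int j - int i > 0 \<longrightarrow> kth_member us (nat (int k + int j - int i)) (num j)) \<and>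
        (int k + int i - int j > 0 \<longrightarrow> kth_member ds (nat (int k + int i - int j)) (num j)))"

definition S_pq :: "atom set" where
  "S_pq = {Pq i (lst cs (Cs i c)) (lst us (Cs i u)) (lst ds (Cs i d)) | i cs c us u ds d.
      length us = length cs \<and> length ds = length cs \<and>
      ground_atom (Pq i (lst cs (Cs i c)) (lst us (Cs i u)) (lst ds (Cs i d)))}"

definition S_pqs :: "atom set" where
  "S_pqs = {Pqs Zr cs us ds | cs us ds. ground cs \<and> ground us \<and> ground ds}
     \<union> {Pqs (num i) cs us (Cs t ds) | i cs us t ds.
          ground_atom (Pqs (num i) cs us (Cs t ds)) \<and> i > 0 \<and>
          (\<forall>j\<in>{1..i}. member (num j) cs) \<and>
          (distinct_members_list cs \<longrightarrow> correct_upto cs us ds i i)}"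

definition S :: "atom set" where
  "S = S_pq \<union> S_pqs"

section \<open>Least Herbrand model of NQUEENS (least set closed under ground instances of C1--C4)\<close>

inductive_set nqueens_lhm :: "atom set" where
  C1: "\<lbrakk>ground x1; ground x2; ground x3\<rbrakk> \<Longrightarrow> Pqs Zr x1 x2 x3 \<in> nqueens_lhm"
| C2: "\<lbrakk>ground x; ground y; Pqs i cs (Cs y us) ds \<in> nqueens_lhm; Pq (Sc i) cs us ds \<in> nqueens_lhm\<rbrakk>
        \<Longrightarrow> Pqs (Sc i) cs us (Cs x ds) \<in> nqueens_lhm"
| C3: "\<lbrakk>ground i; ground x1; ground x2; ground x3\<rbrakk> \<Longrightarrow> Pq i (Cs i x1) (Cs i x2) (Cs i x3) \<in> nqueens_lhm"
| C4: "\<lbrakk>ground x1; ground x2; ground x3; Pq i cs us ds \<in> nqueens_lhm\<rbrakk>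
        \<Longrightarrow> Pq i (Cs x1 cs) (Cs x2 us) (Cs x3 ds) \<in> nqueens_lhm"

definition nqueens_answer :: "atom \<Rightarrow> bool" where
  "nqueens_answer Q \<longleftrightarrow> ground_instances Q \<subseteq> nqueens_lhm"

definition queens_solution :: "nat \<Rightarrow> trm \<Rightarrow> bool" where
  "queens_solution n cs \<longleftrightarrow>
     (\<exists>es. cs = list_term es \<and> distinct es \<and> set es = num ` {1..n}) \<and>
     (\<forall>j\<in>{1..n}. \<forall>j'\<in>{1..n}. \<forall>k k'. j \<noteq> j' \<and> kth_member cs k (num j) \<and> kth_member cs k' (num j')
        \<longrightarrow> k \<noteq> k' \<and> k + j \<noteq> k' + j' \<and> int k - int j \<noteq> int k' - int j')"

end

theory Submission
  imports Defs
begin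

text \<open>
  NQUEENS is correct with respect to \<open>S\<close> because \<open>S\<close> is closed under its clauses; the
  crucial case is C2. There \<open>pq\<close> has put queen \<open>i+1\<close> into a column \<open>k\<close> whose slots \<open>k\<close>
  in \<open>us\<close> and \<open>ds\<close> hold \<open>i+1\<close> as well. Every earlier queen is recorded in \<open>us\<close> and \<open>ds\<close>
  at its diagonal numbers, and a slot holds only one term, so no earlier queen shares a
  diagonal with queen \<open>i+1\<close>.

  For an atom \<open>pqs(n,cs',us',ds')\<close> all of whose ground instances lie in \<open>S\<close>, the instance
  replacing every variable by \<open>[]\<close> shows that the list \<open>cs'\<close> of length \<open>n\<close> contains
  \<open>1,\<dots>,n\<close>, so it is a permutation of them, and correctness up to \<open>n\<close> is then exactly the
  non-attack condition.
\<close>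

lemma lst_simps [simp]: "lst [] r = r" "lst (x # xs) r = Cs x (lst xs r)"
  by (simp_all add: lst_def)

lemma lst_append [simp]: "lst (xs @ ys) r = lst xs (lst ys r)"
  by (simp add: lst_def)

lemma kth_member_iff_lst: "kth_member t k e \<longleftrightarrow> (\<exists>es e'. k = Suc (length es) \<and> t = lst es (Cs e e'))"
proof
  assume "kth_member t k e"
  then obtain es e' where "1 \<le> k" "length es = k - 1" "t = lst es (Cs e e')"
    by (auto simp: kth_member_def)
  then show "\<exists>es e'. k = Suc (length es) \<and> t = lst es (Cs e e')"
    by (intro exI[of _ es] exI[of _ e']) auto
qed (auto simp: kth_member_def)

lemma kth_member_is_Cs:
  assumes "kth_member t k e"
  shows "\<exists>a t'. t = Cs a t'"
proof -
  obtain es e' where "t = lst es (Cs e e')"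
    using assms by (auto simp: kth_member_iff_lst)
  then show ?thesis by (cases es) auto
qed

lemma kth_member_Cs_1 [simp]: "kth_member (Cs a t) (Suc 0) e \<longleftrightarrow> e = a"
  by (auto simp: kth_member_iff_lst)

lemma kth_member_Cs_Suc [simp]: "kth_member (Cs a t) (Suc (Suc k)) e \<longleftrightarrow> kth_member t (Suc k) e"
proof
  assume "kth_member (Cs a t) (Suc (Suc k)) e"
  then obtain es e' where "Suc k = length es" "Cs a t = lst es (Cs e e')"
    by (auto simp: kth_member_iff_lst)
  then show "kth_member t (Suc k) e"
    by (cases es) (auto simp: kth_member_iff_lst)
next
  assume "kth_member t (Suc k) e"
  then obtain es e' where "k = length es" "t = lst es (Cs e e')"
    by (auto simp: kth_member_iff_lst)
  then show "kth_member (Cs a t) (Suc (Suc k)) e"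
    by (auto simp: kth_member_iff_lst intro!: exI[of _ "a # es"])
qed

lemma kth_member_pos: "kth_member t k e \<Longrightarrow> 0 < k"
  by (auto simp: kth_member_iff_lst)

lemma kth_member_Cs_SucI: "kth_member t k e \<Longrightarrow> kth_member (Cs a t) (Suc k) e"
  using kth_member_pos gr0_conv_Suc kth_member_Cs_Suc by metis

lemma kth_member_unique: "kth_member t k e \<Longrightarrow> kth_member t k e' \<Longrightarrow> e = e'"
proof (induction t arbitrary: k)
  case (Cs a t)
  then obtain k' where "k = Suc k'" using kth_member_pos gr0_conv_Suc by blast
  with Cs show ?case by (cases k') auto
qed (auto dest: kth_member_is_Cs)

lemma kth_member_list_term:
  "kth_member (list_term es) (Suc i) e \<longleftrightarrow> i < length es \<and> es ! i = e"
proof (induction es arbitrary: i)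
  case Nil
  then show ?case by (auto simp: list_term_def dest: kth_member_is_Cs)
next
  case (Cons a es)
  then show ?case
    by (cases i) (auto simp: list_term_def)
qed

lemma member_list_term: "member e (list_term es) \<longleftrightarrow> e \<in> set es"
  unfolding member_def in_set_conv_nth
  by (metis kth_member_pos kth_member_list_term gr0_conv_Suc)

lemma distinct_members_list_kth_inj:
  assumes "distinct_members_list cs" "kth_member cs k e" "kth_member cs k' e"
  shows "k = k'"
proof -
  obtain i i' where "k = Suc i" "k' = Suc i'"
    using assms(2,3) kth_member_pos gr0_conv_Suc by metis
  with assms show ?thesis
    by (auto simp: distinct_members_list_def kth_member_list_term nth_eq_iff_index_eq)
qed

lemma num_eq_iff [simp]: "num i = num j \<longleftrightarrow> i = j"
  by (induction i arbitrary: j) (case_tac j; simp)+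

lemma Sc_num_eq_num_iff [simp]: "Sc (num i) = num j \<longleftrightarrow> j = Suc i" "num j = Sc (num i) \<longleftrightarrow> j = Suc i"
  using num_eq_iff[of "Suc i" j] by auto

lemma ground_num [simp]: "ground (num n)"
  by (induction n) auto

lemma subst_num [simp]: "subst \<sigma> (num n) = num n"
  by (induction n) auto

lemma subst_list_term: "subst \<sigma> (list_term es) = list_term (map (subst \<sigma>) es)"
  by (induction es) (auto simp: list_term_def)

lemma ground_subst: "(\<And>x. ground (\<sigma> x)) \<Longrightarrow> ground (subst \<sigma> t)"
  by (induction t) auto

lemma subst_Nl_eq_num: "subst (\<lambda>_. Nl) e = num j \<Longrightarrow> e = num j"
  by (induction j arbitrary: e) (case_tac e; auto)+

definition recorded_on_diagonals :: "trm \<Rightarrow> trm \<Rightarrow> nat \<Rightarrow> nat \<Rightarrow> nat \<Rightarrow> bool" where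
  "recorded_on_diagonals us ds i k j \<longleftrightarrow>
     (int k + int j - int i > 0 \<longrightarrow> kth_member us (nat (int k + int j - int i)) (num j)) \<and>
     (int k + int i - int j > 0 \<longrightarrow> kth_member ds (nat (int k + int i - int j)) (num j))"

lemma correct_upto_iff:
  "correct_upto cs us ds m i \<longleftrightarrow>
     m \<le> i \<and> distinct_members_list cs \<and> (\<forall>j\<in>{1..m}. member (num j) cs) \<and>
     (\<forall>j\<in>{1..m}. \<forall>j'\<in>{1..m}. \<forall>k k'. j \<noteq> j' \<and> kth_member cs k (num j) \<and> kth_member cs k' (num j')
        \<longrightarrow> k + j \<noteq> k' + j' \<and> int k - int j \<noteq> int k' - int j') \<and>
     (\<forall>j\<in>{1..m}. \<forall>k. kth_member cs k (num j) \<longrightarrow> recorded_on_diagonals us ds i k j)"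
proof -
  have "(int k + int j - int i \<noteq> int k' + int j' - int i \<and> int k + int i - int j \<noteq> int k' + int i - int j')
      \<longleftrightarrow> (k + j \<noteq> k' + j' \<and> int k - int j \<noteq> int k' - int j')" for k j k' j' :: nat
    by linarith
  then show ?thesis
    unfolding correct_upto_def recorded_on_diagonals_def by presburger
qed

lemma correct_upto_0: "distinct_members_list cs \<Longrightarrow> correct_upto cs us ds 0 0"
  by (simp add: correct_upto_def)

lemma recorded_on_diagonals_Suc:
  assumes "1 \<le> j" "j \<le> m" "0 < k" and "recorded_on_diagonals (Cs y us) ds m k j"
  shows "recorded_on_diagonals us (Cs t ds) (Suc m) k j"
  unfolding recorded_on_diagonals_def
proof (intro conjI impI)
  assume "int k + int j - int (Suc m) > 0"
  then obtain p where "nat (int k + int j - int m) = Suc (Suc p)"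
    "nat (int k + int j - int (Suc m)) = Suc p"
    by (intro that[of "nat (int k + int j - int m) - 2"]) auto
  then show "kth_member us (nat (int k + int j - int (Suc m))) (num j)"
    using assms(4) by (simp add: recorded_on_diagonals_def)
next
  obtain p where "nat (int k + int m - int j) = Suc p"
    "nat (int k + int (Suc m) - int j) = Suc (Suc p)"
    using assms(2,3) by (intro that[of "nat (int k + int m - int j) - 1"]) auto
  then show "kth_member (Cs t ds) (nat (int k + int (Suc m) - int j)) (num j)"
    using assms(4) by (simp add: recorded_on_diagonals_def)
qed

lemma recorded_on_diagonals_no_attack:
  assumes new: "recorded_on_diagonals us ds i k0 i" "0 < k0"
    and old: "recorded_on_diagonals us ds i k j" "j \<noteq> i"
  shows "k0 + i \<noteq> k + j \<and> int k0 - int i \<noteq> int k - int j"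
proof (intro conjI notI)
  assume "k0 + i = k + j"
  then have "int k + int j - int i = int k0" by simp
  then have "kth_member us k0 (num i)" "kth_member us k0 (num j)"
    using new old by (auto simp: recorded_on_diagonals_def)
  then show False using kth_member_unique \<open>j \<noteq> i\<close> by fastforce
next
  assume "int k0 - int i = int k - int j"
  then have "int k + int i - int j = int k0" by simp
  then have "kth_member ds k0 (num i)" "kth_member ds k0 (num j)"
    using new old by (auto simp: recorded_on_diagonals_def)
  then show False using kth_member_unique \<open>j \<noteq> i\<close> by fastforce
qed

text \<open>From row \<open>m\<close> to row \<open>m+1\<close> up-diagonal numbers drop by one and down-diagonal numbers
  grow by one; clause C2 mirrors this by removing the head of \<open>us\<close> and consing onto \<open>ds\<close>.\<close>

lemma correct_upto_Suc:
  assumes cu: "correct_upto cs (Cs y us) ds m m"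
    and col: "kth_member cs k0 (num (Suc m))"
    and up: "kth_member us k0 (num (Suc m))"
    and down: "kth_member (Cs t ds) k0 (num (Suc m))"
  shows "correct_upto cs us (Cs t ds) (Suc m) (Suc m)"
proof -
  have dml: "distinct_members_list cs" and mem: "\<forall>j\<in>{1..m}. member (num j) cs"
    and diag: "\<And>j j' k k'. \<lbrakk>j \<in> {1..m}; j' \<in> {1..m}; j \<noteq> j'; kth_member cs k (num j);
        kth_member cs k' (num j')\<rbrakk> \<Longrightarrow> k + j \<noteq> k' + j' \<and> int k - int j \<noteq> int k' - int j'"
    and recorded: "\<And>j k. \<lbrakk>j \<in> {1..m}; kth_member cs k (num j)\<rbrakk> \<Longrightarrow>
        recorded_on_diagonals (Cs y us) ds m k j"
    using cu unfolding correct_upto_iff by blast+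
  have k0: "0 < k0" using col kth_member_pos by blast
  have recorded': "recorded_on_diagonals us (Cs t ds) (Suc m) k j"
    if j: "j \<in> {1..Suc m}" and k: "kth_member cs k (num j)" for j k
  proof (cases "j = Suc m")
    case True
    then have "k = k0" using distinct_members_list_kth_inj[OF dml k] col by simp
    then show ?thesis using True up down by (simp add: recorded_on_diagonals_def)
  next
    case False
    then show ?thesis
      using j recorded[OF _ k] kth_member_pos[OF k] by (intro recorded_on_diagonals_Suc) auto
  qed
  have diag': "k + j \<noteq> k' + j' \<and> int k - int j \<noteq> int k' - int j'"
    if j: "j \<in> {1..Suc m}" and j': "j' \<in> {1..Suc m}" and "j \<noteq> j'"
      and k: "kth_member cs k (num j)" and k': "kth_member cs k' (num j')" for j j' k k'
  proof -
    have new: "recorded_on_diagonals us (Cs t ds) (Suc m) k0 (Suc m)"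
      using recorded' col by simp
    consider "j \<in> {1..m}" "j' \<in> {1..m}" | "j = Suc m" | "j' = Suc m"
      using j j' by fastforce
    then show ?thesis
    proof cases
      case 1
      then show ?thesis using diag \<open>j \<noteq> j'\<close> k k' by blast
    next
      case 2
      then have "k = k0" using distinct_members_list_kth_inj[OF dml _ col] k by simp
      then show ?thesis
        using recorded_on_diagonals_no_attack[OF new k0 recorded'[OF j' k']] 2 \<open>j \<noteq> j'\<close> by auto
    next
      case 3
      then have "k' = k0" using distinct_members_list_kth_inj[OF dml _ col] k' by simp
      then show ?thesis
        using recorded_on_diagonals_no_attack[OF new k0 recorded'[OF j k]] 3 \<open>j \<noteq> j'\<close> by auto
    qed
  qed
  have "member (num (Suc m)) cs" using col member_def by blast
  with mem have "\<forall>j\<in>{1..Suc m}. member (num j) cs"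
    by (metis atLeastAtMost_iff le_Suc_eq)
  with dml diag' recorded' show ?thesis
    unfolding correct_upto_iff by blast
qed

lemma Pq_in_S_pq_iff:
  "Pq i cs us ds \<in> S_pq \<longleftrightarrow> ground_atom (Pq i cs us ds) \<and>
     (\<exists>k. kth_member cs k i \<and> kth_member us k i \<and> kth_member ds k i)"
proof
  assume "Pq i cs us ds \<in> S_pq"
  then obtain cs0 c us0 u ds0 d where "cs = lst cs0 (Cs i c)" "us = lst us0 (Cs i u)"
    "ds = lst ds0 (Cs i d)" "length us0 = length cs0" "length ds0 = length cs0"
    "ground_atom (Pq i cs us ds)"
    unfolding S_pq_def by auto
  moreover have "kth_member (lst es (Cs i e)) (Suc (length es)) i" for es e
    by (auto simp: kth_member_iff_lst)
  ultimately show "ground_atom (Pq i cs us ds) \<and>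
      (\<exists>k. kth_member cs k i \<and> kth_member us k i \<and> kth_member ds k i)"
    by metis
next
  assume "ground_atom (Pq i cs us ds) \<and>
      (\<exists>k. kth_member cs k i \<and> kth_member us k i \<and> kth_member ds k i)"
  then obtain cs0 c us0 u ds0 d where "cs = lst cs0 (Cs i c)" "us = lst us0 (Cs i u)"
    "ds = lst ds0 (Cs i d)" "length us0 = length cs0" "length ds0 = length cs0"
    "ground_atom (Pq i cs us ds)"
    unfolding kth_member_iff_lst by (metis Suc_inject)
  then show "Pq i cs us ds \<in> S_pq"
    unfolding S_pq_def by blast
qed

lemma Pqs_Cs_in_S_pqs_iff:
  "Pqs (num m) cs us (Cs t ds) \<in> S_pqs \<longleftrightarrow>
     ground cs \<and> ground us \<and> ground t \<and> ground ds \<and> (\<forall>j\<in>{1..m}. member (num j) cs) \<and>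
     (distinct_members_list cs \<longrightarrow> correct_upto cs us ds m m)"
  by (cases m) (auto simp: S_pqs_def correct_upto_0)

lemma Pqs_in_S_pqs_num: "Pqs i cs us ds \<in> S_pqs \<Longrightarrow> \<exists>m. i = num m"
  by (auto simp: S_pqs_def intro: exI[of _ 0])

lemma Pqs_Suc_in_S_pqs_Cs: "Pqs (num (Suc m)) cs us ds \<in> S_pqs \<Longrightarrow> \<exists>t ds'. ds = Cs t ds'"
  by (auto simp: S_pqs_def)

lemma S_pqs_closed_under_C2:
  assumes prev: "Pqs i cs (Cs y us) ds \<in> S_pqs" and placed: "Pq (Sc i) cs us ds \<in> S_pq"
    and "ground x"
  shows "Pqs (Sc i) cs us (Cs x ds) \<in> S_pqs"
proof -
  obtain m where i: "i = num m" using Pqs_in_S_pqs_num[OF prev] by blast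
  obtain k where "ground_atom (Pq (Sc i) cs us ds)" and col: "kth_member cs k (num (Suc m))"
    and up: "kth_member us k (num (Suc m))" and down: "kth_member ds k (num (Suc m))"
    using placed i by (auto simp: Pq_in_S_pq_iff)
  obtain t ds' where ds: "ds = Cs t ds'" using kth_member_is_Cs[OF down] by blast
  have grounded: "ground cs" "ground us" "ground ds"
    and mem: "\<forall>j\<in>{1..m}. member (num j) cs"
    and cu: "distinct_members_list cs \<longrightarrow> correct_upto cs (Cs y us) ds' m m"
    using prev unfolding i ds Pqs_Cs_in_S_pqs_iff by auto
  have "member (num (Suc m)) cs" using col member_def by blast
  with mem have "\<forall>j\<in>{1..Suc m}. member (num j) cs"
    by (metis atLeastAtMost_iff le_Suc_eq)
  moreover have "distinct_members_list cs \<longrightarrow> correct_upto cs us ds (Suc m) (Suc m)"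
    using cu correct_upto_Suc[OF _ col up down[unfolded ds]] ds by blast
  ultimately have "Pqs (num (Suc m)) cs us (Cs x ds) \<in> S_pqs"
    using grounded \<open>ground x\<close> unfolding Pqs_Cs_in_S_pqs_iff by blast
  then show ?thesis by (simp add: i)
qed

lemma nqueens_lhm_subset_S: "nqueens_lhm \<subseteq> S"
proof
  fix a assume "a \<in> nqueens_lhm"
  then show "a \<in> S"
  proof (induction rule: nqueens_lhm.induct)
    case (C1 x1 x2 x3)
    then show ?case by (auto simp: S_def S_pqs_def)
  next
    case (C2 x y i cs us ds)
    then have "Pqs i cs (Cs y us) ds \<in> S_pqs" and "Pq (Sc i) cs us ds \<in> S_pq"
      by (auto simp: S_def S_pq_def S_pqs_def)
    then show ?case using S_pqs_closed_under_C2 C2.hyps(1) by (simp add: S_def)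
  next
    case (C3 i x1 x2 x3)
    then show ?case by (auto simp: S_def Pq_in_S_pq_iff intro!: exI[of _ 1])
  next
    case (C4 x1 x2 x3 i cs us ds)
    then have "Pq i cs us ds \<in> S_pq" by (simp add: S_def S_pqs_def)
    then obtain k where "ground_atom (Pq i cs us ds)"
      "kth_member cs k i" "kth_member us k i" "kth_member ds k i"
      by (auto simp: Pq_in_S_pq_iff)
    then show ?case
      using C4.hyps(1-3) by (auto simp: S_def Pq_in_S_pq_iff intro!: exI[of _ "Suc k"] kth_member_Cs_SucI)
  qed
qed

lemma distinct_and_set_eq_if_covers:
  assumes "finite A" "A \<subseteq> set xs" "length xs = card A"
  shows "distinct xs \<and> set xs = A"
proof -
  have "card A \<le> card (set xs)" using assms(1,2) by (simp add: card_mono)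
  moreover have "card (set xs) \<le> length xs" by (rule card_length)
  ultimately have "card (set xs) = length xs" and "card A = card (set xs)" using assms(3) by auto
  then show ?thesis
    using card_distinct card_subset_eq[OF List.finite_set assms(2)] by metis
qed

lemma queens_solution_if_correct_upto:
  assumes "distinct es" "set es = num ` {1..n}" "correct_upto (list_term es) us ds n n"
  shows "queens_solution n (list_term es)"
  unfolding queens_solution_def
proof (intro conjI ballI allI impI)
  show "\<exists>es'. list_term es = list_term es' \<and> distinct es' \<and> set es' = num ` {1..n}"
    using assms(1,2) by blast
next
  fix j j' k k' assume "j \<in> {1..n}" "j' \<in> {1..n}"
    and h: "j \<noteq> j' \<and> kth_member (list_term es) k (num j) \<and> kth_member (list_term es) k' (num j')"
  then show "k + j \<noteq> k' + j'" "int k - int j \<noteq> int k' - int j'"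
    using assms(3) unfolding correct_upto_iff by blast+
  show "k \<noteq> k'"
    using h kth_member_unique[of "list_term es" k "num j" "num j'"] by auto
qed

lemma queens_solution_if_ground_instances_in_S:
  assumes n: "0 < n" and len: "length es = n"
    and spec: "ground_instances (Pqs (num n) (list_term es) us ds) \<subseteq> S"
  shows "queens_solution n (list_term es)"
proof -
  \<comment> \<open>Substituting \<open>[]\<close> cannot turn a non-numeral into a numeral.\<close>
  define \<sigma> :: "nat \<Rightarrow> trm" where "\<sigma> = (\<lambda>_. Nl)"
  define es' where "es' = map (subst \<sigma>) es"
  have "atom_subst \<sigma> (Pqs (num n) (list_term es) us ds) \<in> ground_instances (Pqs (num n) (list_term es) us ds)"
    unfolding ground_instances_def
    by (auto intro!: exI[of _ \<sigma>] ground_subst simp del: subst.simps) (simp_all add: \<sigma>_def)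
  with spec have "Pqs (num n) (list_term es') (subst \<sigma> us) (subst \<sigma> ds) \<in> S_pqs"
    by (auto simp: S_def S_pq_def es'_def subst_list_term)
  moreover obtain t ds' where ds': "subst \<sigma> ds = Cs t ds'"
    using Pqs_Suc_in_S_pqs_Cs calculation n gr0_conv_Suc by metis
  ultimately have mem: "\<forall>j\<in>{1..n}. member (num j) (list_term es')"
    and cu: "distinct_members_list (list_term es') \<longrightarrow> correct_upto (list_term es') (subst \<sigma> us) ds' n n"
    by (simp_all add: Pqs_Cs_in_S_pqs_iff)
  have "card (num ` {1..n}) = n"
    by (simp add: card_image inj_on_def)
  then have es': "distinct es' \<and> set es' = num ` {1..n}"
    using mem len by (intro distinct_and_set_eq_if_covers) (auto simp: member_list_term es'_def)
  have "es' = es"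
    unfolding es'_def
  proof (rule map_idI)
    fix e assume "e \<in> set es"
    then have "subst \<sigma> e \<in> num ` {1..n}" using es' by (auto simp: es'_def)
    then show "subst \<sigma> e = e" using subst_Nl_eq_num by (auto simp: \<sigma>_def)
  qed
  with es' cu show ?thesis
    by (auto simp: distinct_members_list_def intro: queens_solution_if_correct_upto)
qed

theorem mainTheorem3:
  shows "(\<forall>n cs' us' ds'. n > 0 \<and> (\<exists>es. length es = n \<and> cs' = list_term es) \<and>
            ground_instances (Pqs (num n) cs' us' ds') \<subseteq> S
           \<longrightarrow> queens_solution n cs') \<and>
         (\<forall>n vs x y \<theta>. n > 0 \<and> length vs = n \<and> distinct vs \<and>
            nqueens_answer (atom_subst \<theta> (Pqs (num n) (list_term (map V vs)) (V x) (V y)))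
           \<longrightarrow> queens_solution n (subst \<theta> (list_term (map V vs))))"
proof (intro conjI allI impI)
  fix n cs' us' ds'
  assume "n > 0 \<and> (\<exists>es. length es = n \<and> cs' = list_term es) \<and>
    ground_instances (Pqs (num n) cs' us' ds') \<subseteq> S"
  then show "queens_solution n cs'"
    using queens_solution_if_ground_instances_in_S by blast
next
  fix n vs x y \<theta>
  assume h: "n > 0 \<and> length vs = n \<and> distinct vs \<and>
    nqueens_answer (atom_subst \<theta> (Pqs (num n) (list_term (map V vs)) (V x) (V y)))"
  have query: "atom_subst \<theta> (Pqs (num n) (list_term (map V vs)) (V x) (V y)) =
      Pqs (num n) (list_term (map \<theta> vs)) (\<theta> x) (\<theta> y)"
    by (simp add: subst_list_term comp_def)
  have "ground_instances (Pqs (num n) (list_term (map \<theta> vs)) (\<theta> x) (\<theta> y)) \<subseteq> S"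
    using h nqueens_lhm_subset_S unfolding nqueens_answer_def query by blast
  then show "queens_solution n (subst \<theta> (list_term (map V vs)))"
    using queens_solution_if_ground_instances_in_S[of n "map \<theta> vs"] h
    by (simp add: subst_list_term comp_def)
qed

end
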